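(* For any $0\le t<1$ and $x\in\mathbb{R}$, $J^*(t,x)\ge g(t,x)$, where $$J^*(t,x)=\begin{cases}(1-t)^{n+1/2}(F_{2n+1}+G_{2n+1})(x/\sqrt{1-t})\,j(B^* ), & |x|<B^*\sqrt{1-t},\\ g(t,x), & |x|\ge B^*\sqrt{1-t}.\end{cases}$$
   Context: $n\ge0$ is an integer. $F_q(y):=\int_0^\infty u^{q-1}e^{yu-u^2/2}\,\mathrm{d}u$ and $G_q(y):=F_q(-y)$. $B^*>0$ is the unique zero of $B\mapsto(2n+1)-BF'_{2n+1}(B)/F_{2n+1}(B)$; it maximizes $B\mapsto B^{2n+1}/F_{2n+1}(B)$. $U(t,x)=(1-t)^{n+1/2}(B^* )^{2n+1}F_{2n+1}(x/\sqrt{1-t})/F_{2n+1}(B^* )$ if $x<B^*\sqrt{1-t}$, and $U(t,x)=x^{2n+1}$ otherwise. $g(t,x):=(U(t,x)-x^{2n+1})1_{\{x\le0\}}+(U(t,-x)+x^{2n+1})1_{\{x>0\}}$. $j(D):=\frac{1}{(F_{2n+1}+G_{2n+1})(D)}[D^{2n+1}+(B^* )^{2n+1}G_{2n+1}(D)/F_{2n+1}(B^* )]$ for $D\ge0$. *)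

theory Defs
  imports "HOL-Analysis.Analysis"
begin

definition F :: "nat \<Rightarrow> real \<Rightarrow> real" where
  "F q y = integral {0..} (\<lambda>u::real. u ^ (q - 1) * exp (y * u - u\<^sup>2 / 2))"

definition G :: "nat \<Rightarrow> real \<Rightarrow> real" where
  "G q y = F q (- y)"

definition Bstar :: "nat \<Rightarrow> real" where
  "Bstar n = (THE B. B > 0 \<and>
      real (2*n+1) - B * deriv (F (2*n+1)) B / F (2*n+1) B = 0)"

definition U :: "nat \<Rightarrow> real \<Rightarrow> real \<Rightarrow> real" where
  "U n t x = (if x < Bstar n * sqrt (1 - t)
     then (1 - t) powr (real n + 1/2) * (Bstar n) ^ (2*n+1)
          * F (2*n+1) (x / sqrt (1 - t)) / F (2*n+1) (Bstar n)
     else x ^ (2*n+1))"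

definition g :: "nat \<Rightarrow> real \<Rightarrow> real \<Rightarrow> real" where
  "g n t x = (if x \<le> 0 then U n t x - x ^ (2*n+1) else U n t (- x) + x ^ (2*n+1))"

definition j :: "nat \<Rightarrow> real \<Rightarrow> real" where
  "j n D = (D ^ (2*n+1) + (Bstar n) ^ (2*n+1) * G (2*n+1) D / F (2*n+1) (Bstar n))
           / (F (2*n+1) D + G (2*n+1) D)"

definition Jstar :: "nat \<Rightarrow> real \<Rightarrow> real \<Rightarrow> real" where
  "Jstar n t x = (if \<bar>x\<bar> < Bstar n * sqrt (1 - t)
     then (1 - t) powr (real n + 1/2)
          * (F (2*n+1) (x / sqrt (1 - t)) + G (2*n+1) (x / sqrt (1 - t))) * j n (Bstar n)
     else g n t x)"

end

theory Submission imports Defs "HOL-Real_Asymp.Real_Asymp" begin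

text \<open>Put q = 2n+1, s = sqrt(1-t), y = |x|/s and c = B*^q / F_q(B*), so that j(B*) = c and
  (1-t)^(n+1/2) = s^q. Because q is odd, both branches of g collapse to g(t,x) = s^q (c F_q(-y) + y^q),
  while J*(t,x) = s^q c (F_q(y) + F_q(-y)) for y < B*. So the claim is z^q / F_q(z) <= c on [0,B*].
  Differentiating under the integral gives F_k' = F_{k+1}, and Cauchy-Schwarz gives
  F_{k+1}^2 <= F_k F_{k+2}; hence F_{k+1}/F_k is nondecreasing and z F_{k+1}(z)/F_k(z) is strictly
  increasing on [0,oo). This makes B* well defined, and shows that the logarithmic derivative
  q/z - F_{q+1}(z)/F_q(z) of z^q / F_q(z) is nonnegative below B*.\<close>

definition F_integrand :: "nat \<Rightarrow> real \<Rightarrow> real \<Rightarrow> real" where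
  "F_integrand k z u = u ^ (k - 1) * exp (z * u - u\<^sup>2 / 2)"

lemma F_eq_integral: "F k z = integral {0..} (F_integrand k z)"
  by (simp add: F_def F_integrand_def[abs_def])

lemma continuous_on_F_integrand: "continuous_on S (F_integrand k z)"
  unfolding F_integrand_def by (intro continuous_intros) auto

lemma F_integrand_nonneg: "0 \<le> u \<Longrightarrow> 0 \<le> F_integrand k z u"
  unfolding F_integrand_def by simp

lemma abs_F_integrand_le:
  assumes "\<bar>z\<bar> \<le> M" "0 \<le> u"
  shows "\<bar>F_integrand k z u\<bar> \<le> exp ((M + real k + 1)\<^sup>2 / 2) * exp (- u)"
proof -
  have "u \<le> exp u" using exp_ge_add_one_self[of u] by linarith
  hence "u ^ (k - 1) \<le> exp u ^ (k - 1)" using assms(2) by (intro power_mono) auto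
  also have "\<dots> = exp (real (k - 1) * u)" by (simp add: exp_of_nat_mult)
  also have "\<dots> \<le> exp (real k * u)" using assms(2) by (intro exp_mono mult_right_mono) auto
  finally have power_le: "u ^ (k - 1) \<le> exp (real k * u)" .
  have "z * u \<le> M * u" using assms by (intro mult_right_mono) auto
  then have "\<bar>F_integrand k z u\<bar> \<le> exp (real k * u) * exp (M * u - u\<^sup>2 / 2)"
    using assms(2) power_le by (auto simp: F_integrand_def intro: mult_mono)
  also have "\<dots> = exp ((M + real k + 1) * u - u\<^sup>2 / 2) * exp (- u)"
    by (simp flip: exp_add add: algebra_simps)
  also have "\<dots> \<le> exp ((M + real k + 1)\<^sup>2 / 2) * exp (- u)"
    using sum_squares_ge_zero[of "M + real k + 1 - u" 0]
    by (simp add: power2_eq_square algebra_simps)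
  finally show ?thesis .
qed

lemma F_integrand_integrable_on: "F_integrand k z integrable_on {0..}"
proof (rule integrable_on_all_intervals_integrable_bound)
  fix a b :: real
  have "F_integrand k z integrable_on {max 0 a..b}"
    by (intro integrable_continuous_interval continuous_on_F_integrand)
  moreover have "{0..} \<inter> cbox a b = {max 0 a..b}" by auto
  ultimately show "(\<lambda>u. if u \<in> {0..} then F_integrand k z u else 0) integrable_on cbox a b"
    unfolding integrable_restrict_Int by simp
next
  fix u :: real assume "u \<in> {0..}"
  then show "norm (F_integrand k z u) \<le> exp ((\<bar>z\<bar> + real k + 1)\<^sup>2 / 2) * exp (- 1 * u)"
    using abs_F_integrand_le[of z "\<bar>z\<bar>" u k] by simp
next
  show "(\<lambda>u. exp ((\<bar>z\<bar> + real k + 1)\<^sup>2 / 2) * exp (- 1 * u)) integrable_on {0..}"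
    by (intro integrable_on_mult_right integrable_on_exp_minus_to_infinity) auto
qed

lemma abs_F_minus_integral_le:
  assumes "\<bar>z\<bar> \<le> M" "0 \<le> T"
  shows "\<bar>F k z - integral {0..T} (F_integrand k z)\<bar> \<le> 2 * exp ((M + real k + 1)\<^sup>2 / 2) * exp (- T / 2)"
proof -
  define C where "C = exp ((M + real k + 1)\<^sup>2 / 2)"
  define head where "head u = (if u \<in> {0..T} then F_integrand k z u else 0)" for u
  define tail where "tail u = F_integrand k z u - head u" for u
  have "F_integrand k z integrable_on {0..T}"
    by (intro integrable_continuous_interval continuous_on_F_integrand)
  then have "(head has_integral integral {0..T} (F_integrand k z)) {0..}"
    unfolding head_def by (subst has_integral_restrict) auto
  then have tail_integral: "(tail has_integral (F k z - integral {0..T} (F_integrand k z))) {0..}"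
    unfolding tail_def[abs_def] F_eq_integral
    by (intro has_integral_diff integrable_integral F_integrand_integrable_on)
  have bound_integral: "((\<lambda>u. C * exp (- T / 2) * exp (- (1/2) * u)) has_integral C * exp (- T / 2) * 2) {0..}"
    using has_integral_mult_right[OF has_integral_exp_minus_to_infinity[of "1/2" 0], of "C * exp (- T / 2)"]
    by simp
  have "norm (integral {0..} tail) \<le> integral {0..} (\<lambda>u. C * exp (- T / 2) * exp (- (1/2) * u))"
  proof (rule integral_norm_bound_integral)
    fix u :: real assume u: "u \<in> {0..}"
    show "norm (tail u) \<le> C * exp (- T / 2) * exp (- (1/2) * u)"
    proof (cases "u \<le> T")
      case False
      have "norm (tail u) \<le> C * exp (- u)"
        using False u abs_F_integrand_le[OF assms(1), of u k] by (simp add: tail_def head_def C_def)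
      also have "\<dots> = C * (exp (- u / 2) * exp (- (1/2) * u))" by (simp flip: exp_add)
      also have "\<dots> \<le> C * (exp (- T / 2) * exp (- (1/2) * u))"
        using False by (intro mult_left_mono mult_right_mono) (auto simp: C_def)
      finally show ?thesis by simp
    qed (use u in \<open>simp add: tail_def head_def C_def\<close>)
  qed (use tail_integral bound_integral in blast)+
  also have "\<dots> = C * exp (- T / 2) * 2" using bound_integral by blast
  finally show ?thesis
    using tail_integral by (simp add: C_def integral_unique mult_ac)
qed

lemma eventually_F_truncation_uniform:
  assumes "e > 0"
  shows "\<forall>\<^sub>F N in sequentially. \<forall>z. \<bar>z\<bar> \<le> M \<longrightarrow> \<bar>F k z - integral {0..real N} (F_integrand k z)\<bar> \<le> e"
proof -
  define C where "C = exp ((M + real k + 1)\<^sup>2 / 2)"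
  have "(\<lambda>N. 2 * C * exp (- real N / 2)) \<longlonglongrightarrow> 0" by real_asymp
  then have "\<forall>\<^sub>F N in sequentially. 2 * C * exp (- real N / 2) < e"
    using assms by (simp add: order_tendsto_iff)
  then show ?thesis
  proof (rule eventually_mono)
    fix N assume "2 * C * exp (- real N / 2) < e"
    then show "\<forall>z. \<bar>z\<bar> \<le> M \<longrightarrow> \<bar>F k z - integral {0..real N} (F_integrand k z)\<bar> \<le> e"
      using abs_F_minus_integral_le[of _ M "real N" k] by (force simp: C_def)
  qed
qed

lemma tendsto_integral_F_integrand:
  "(\<lambda>N. integral {0..real N} (F_integrand k z)) \<longlonglongrightarrow> F k z"
proof (rule tendstoI)
  fix e :: real assume "e > 0"
  from eventually_F_truncation_uniform[of "e/2" "\<bar>z\<bar>" k] this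
  show "\<forall>\<^sub>F N in sequentially. dist (integral {0..real N} (F_integrand k z)) (F k z) < e"
    by (auto elim!: eventually_mono simp: dist_real_def abs_minus_commute)
qed

lemma has_field_derivative_integral_F_integrand:
  assumes "k \<ge> 1" "z \<in> S" "convex S"
  shows "((\<lambda>z. integral {0..T} (F_integrand k z)) has_field_derivative
    integral {0..T} (F_integrand (Suc k) z)) (at z within S)"
proof -
  have "((\<lambda>z. integral (cbox 0 T) (F_integrand k z)) has_field_derivative
      integral (cbox 0 T) (F_integrand (Suc k) z)) (at z within S)"
  proof (rule leibniz_rule_field_derivative[OF _ _ _ assms(2,3)])
    fix x t :: real
    show "((\<lambda>x. F_integrand k x t) has_field_derivative F_integrand (Suc k) x t) (at x within S)"
      unfolding F_integrand_def
      by (rule derivative_eq_intros refl)+ (use assms(1) in \<open>cases k; simp add: algebra_simps\<close>)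
  next
    show "continuous_on (S \<times> cbox 0 T) (\<lambda>(x, t). F_integrand (Suc k) x t)"
      unfolding F_integrand_def split_beta by (intro continuous_intros) auto
  qed (intro integrable_continuous continuous_on_F_integrand)
  then show ?thesis by simp
qed

lemma has_real_derivative_F:
  assumes "k \<ge> 1"
  shows "(F k has_real_derivative F (Suc k) z) (at z)"
proof -
  define M where "M = \<bar>z\<bar> + 1"
  define S where "S = {- M<..<M}"
  have "z \<in> S" "open S" "convex S" by (auto simp: S_def M_def)
  define f where "f N y = integral {0..real N} (F_integrand k y)" for N y
  note f_lim = tendsto_integral_F_integrand[of k, folded f_def]
  have "\<exists>h. \<forall>x\<in>S. (\<lambda>N. f N x) \<longlonglongrightarrow> h x \<and> (h has_derivative (*) (F (Suc k) x)) (at x within S)"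
  proof (rule has_derivative_sequence[OF \<open>convex S\<close> _ _ \<open>z \<in> S\<close> f_lim])
    fix N x assume "x \<in> S"
    then show "(f N has_derivative (*) (integral {0..real N} (F_integrand (Suc k) x))) (at x within S)"
      using has_field_derivative_integral_F_integrand[OF assms _ \<open>convex S\<close>]
      by (simp add: f_def[abs_def] has_field_derivative_def)
  next
    fix e :: real assume "e > 0"
    from eventually_F_truncation_uniform[OF this, of M "Suc k"]
    show "\<forall>\<^sub>F N in sequentially. \<forall>x\<in>S. \<forall>h. norm (integral {0..real N} (F_integrand (Suc k) x) * h
        - F (Suc k) x * h) \<le> e * norm h"
      by eventually_elim
        (auto simp: S_def abs_mult abs_minus_commute intro!: mult_right_mono simp flip: left_diff_distrib)
  qed
  then obtain h where h: "\<And>x. x \<in> S \<Longrightarrow> (\<lambda>N. f N x) \<longlonglongrightarrow> h x \<and>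
      (h has_derivative (*) (F (Suc k) x)) (at x within S)"
    by blast
  have "(h has_field_derivative F (Suc k) z) (at z)"
    using h[OF \<open>z \<in> S\<close>] at_within_open[OF \<open>z \<in> S\<close> \<open>open S\<close>] by (simp add: has_field_derivative_def)
  then show ?thesis
    by (rule has_field_derivative_transform_within_open[OF _ \<open>open S\<close> \<open>z \<in> S\<close>])
      (use h f_lim LIMSEQ_unique in blast)
qed

lemma F_pos: "0 < F k z"
proof -
  define c where "c = (1/2::real) ^ (k - 1) * exp (- \<bar>z\<bar> - 1/2)"
  have c: "c > 0" by (simp add: c_def)
  have step_integral: "((\<lambda>u::real. if u \<in> {1/2..1} then c else 0) has_integral c / 2) {0..}"
    using has_integral_restrict[of "{1/2..1::real}" "{0..}" "\<lambda>u. c"]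
      has_integral_const_real[of c "1/2" "1::real"]
    by simp
  have "c / 2 \<le> integral {0..} (F_integrand k z)"
  proof (rule has_integral_le[OF step_integral integrable_integral[OF F_integrand_integrable_on]])
    fix u :: real assume u: "u \<in> {0..}"
    show "(if u \<in> {1/2..1} then c else 0) \<le> F_integrand k z u"
    proof (cases "u \<in> {1/2..1}")
      case True
      have "\<bar>z * u\<bar> \<le> \<bar>z\<bar>" using True by (auto simp: abs_mult intro: mult_left_le)
      moreover have "u\<^sup>2 \<le> 1" using True by (simp add: power_le_one)
      ultimately have "- \<bar>z\<bar> - 1/2 \<le> z * u - u\<^sup>2 / 2" by linarith
      moreover have "(1/2::real) ^ (k - 1) \<le> u ^ (k - 1)" using True by (intro power_mono) auto
      ultimately show ?thesis
        using True unfolding c_def F_integrand_def by (auto intro: mult_mono)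
    qed (use u F_integrand_nonneg in auto)
  qed
  then show ?thesis using c by (simp add: F_eq_integral)
qed

lemma F_Suc_square_le:
  assumes "k \<ge> 1"
  shows "F (Suc k) z ^ 2 \<le> F (Suc (Suc k)) z * F k z"
proof -
  have quadratic_nonneg: "0 \<le> F (Suc (Suc k)) z - 2 * l * F (Suc k) z + l\<^sup>2 * F k z" for l
  proof (rule has_integral_nonneg)
    show "((\<lambda>u. F_integrand (Suc (Suc k)) z u - 2 * l * F_integrand (Suc k) z u + l\<^sup>2 * F_integrand k z u)
        has_integral (F (Suc (Suc k)) z - 2 * l * F (Suc k) z + l\<^sup>2 * F k z)) {0..}"
      unfolding F_eq_integral
      by (intro has_integral_add has_integral_diff has_integral_mult_right
          integrable_integral F_integrand_integrable_on)
  next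
    fix u :: real assume "u \<in> {0..}"
    moreover have "F_integrand (Suc (Suc k)) z u - 2 * l * F_integrand (Suc k) z u + l\<^sup>2 * F_integrand k z u
        = F_integrand k z u * (u - l)\<^sup>2"
      using assms by (cases k) (simp_all add: F_integrand_def power2_eq_square algebra_simps)
    ultimately show "0 \<le> F_integrand (Suc (Suc k)) z u - 2 * l * F_integrand (Suc k) z u + l\<^sup>2 * F_integrand k z u"
      using F_integrand_nonneg[of u k z] by simp
  qed
  have pos: "F k z > 0" by (rule F_pos)
  have "0 \<le> F (Suc (Suc k)) z - 2 * (F (Suc k) z / F k z) * F (Suc k) z + (F (Suc k) z / F k z)\<^sup>2 * F k z"
    by (rule quadratic_nonneg)
  also have "\<dots> = (F (Suc (Suc k)) z * F k z - F (Suc k) z ^ 2) / F k z"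
    using pos by (simp add: field_simps power2_eq_square)
  finally show ?thesis using pos by (simp add: zero_le_divide_iff)
qed

definition F_ratio :: "nat \<Rightarrow> real \<Rightarrow> real" where
  "F_ratio k z = F (Suc k) z / F k z"

lemma F_ratio_pos: "0 < F_ratio k z"
  unfolding F_ratio_def using F_pos by simp

lemma has_real_derivative_F_ratio:
  assumes "k \<ge> 1"
  shows "(F_ratio k has_real_derivative
     (F (Suc (Suc k)) z * F k z - F (Suc k) z ^ 2) / (F k z)\<^sup>2) (at z)"
  unfolding F_ratio_def[abs_def] using F_pos[of k z] assms
  by (auto intro!: derivative_eq_intros has_real_derivative_F simp: power2_eq_square)

lemma F_ratio_mono:
  assumes "k \<ge> 1" "a \<le> b"
  shows "F_ratio k a \<le> F_ratio k b"
  using DERIV_nonneg_imp_nondecreasing[OF assms(2)] has_real_derivative_F_ratio[OF assms(1)]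
    F_Suc_square_le[OF assms(1)]
  by (metis diff_ge_0_iff_ge divide_nonneg_pos F_pos zero_less_power)

lemma has_real_derivative_mult_F_ratio:
  assumes "k \<ge> 1"
  shows "((\<lambda>z. z * F_ratio k z) has_real_derivative
     F_ratio k z + z * ((F (Suc (Suc k)) z * F k z - F (Suc k) z ^ 2) / (F k z)\<^sup>2)) (at z)"
  by (rule derivative_eq_intros has_real_derivative_F_ratio[OF assms] refl)+ simp

lemma mult_F_ratio_strict_mono:
  assumes "k \<ge> 1" "0 \<le> a" "a < b"
  shows "a * F_ratio k a < b * F_ratio k b"
proof (rule DERIV_pos_imp_increasing[OF assms(3)])
  fix x assume "a \<le> x" "x \<le> b"
  then have "0 \<le> x" using assms by simp
  moreover have "0 \<le> (F (Suc (Suc k)) x * F k x - F (Suc k) x ^ 2) / (F k x)\<^sup>2"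
    using F_Suc_square_le[OF assms(1), of x] by simp
  ultimately show "\<exists>y. ((\<lambda>z. z * F_ratio k z) has_real_derivative y) (at x) \<and> 0 < y"
    using has_real_derivative_mult_F_ratio[OF assms(1), of x] F_ratio_pos[of k x]
    by (meson add_pos_nonneg mult_nonneg_nonneg)
qed

lemma ex_mult_F_ratio_eq:
  assumes "k \<ge> 1"
  shows "\<exists>B>0. B * F_ratio k B = real k"
proof -
  define b where "b = (real k + 1) / F_ratio k 0"
  have b: "b > 0" using F_ratio_pos[of k 0] by (simp add: b_def)
  have "real k + 1 = b * F_ratio k 0" using F_ratio_pos[of k 0] by (simp add: b_def)
  also have "\<dots> \<le> b * F_ratio k b" using b F_ratio_mono[OF assms, of 0 b] by (intro mult_left_mono) auto
  finally have "real k \<le> b * F_ratio k b" by simp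
  moreover have "continuous_on {0..b} (\<lambda>z. z * F_ratio k z)"
    using has_real_derivative_mult_F_ratio[OF assms]
    by (meson DERIV_isCont continuous_at_imp_continuous_on)
  ultimately obtain B where "0 \<le> B" "B \<le> b" "B * F_ratio k B = real k"
    using IVT'[of "\<lambda>z. z * F_ratio k z" 0 "real k" b] b by auto
  moreover have "B \<noteq> 0" using calculation assms by auto
  ultimately show ?thesis by (intro exI[of _ B]) auto
qed

lemma Bstar_pos_and_eq:
  "0 < Bstar n \<and> Bstar n * F_ratio (2*n+1) (Bstar n) = real (2*n+1)"
proof -
  let ?q = "2*n+1"
  have defining_eq: "(real ?q - B * deriv (F ?q) B / F ?q B = 0) \<longleftrightarrow> B * F_ratio ?q B = real ?q" for B
    using DERIV_imp_deriv[OF has_real_derivative_F[of ?q B]] by (auto simp: F_ratio_def)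
  have "\<exists>!B. B > 0 \<and> B * F_ratio ?q B = real ?q"
  proof (rule ex_ex1I)
    fix x y assume "x > 0 \<and> x * F_ratio ?q x = real ?q" "y > 0 \<and> y * F_ratio ?q y = real ?q"
    then show "x = y"
      using mult_F_ratio_strict_mono[of ?q x y] mult_F_ratio_strict_mono[of ?q y x]
      by (cases x y rule: linorder_cases) auto
  qed (use ex_mult_F_ratio_eq[of ?q] in auto)
  then show ?thesis
    unfolding Bstar_def defining_eq by (rule theI')
qed

lemma power_div_F_le:
  assumes "k \<ge> 1" "0 \<le> z" "z \<le> B" "B * F_ratio k B \<le> real k"
  shows "z ^ k / F k z \<le> B ^ k / F k B"
proof (rule DERIV_nonneg_imp_nondecreasing[OF assms(3)])
  fix x assume x: "z \<le> x" "x \<le> B"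
  have F_x: "F k x > 0" by (rule F_pos)
  have "x * F_ratio k x \<le> B * F_ratio k B"
    using mult_F_ratio_strict_mono[OF assms(1), of x B] x assms(2) by (cases "x = B") auto
  then have "x * F_ratio k x * F k x \<le> real k * F k x"
    using assms(4) F_x by (intro mult_right_mono) auto
  then have "x * F (Suc k) x \<le> real k * F k x"
    using F_x by (simp add: F_ratio_def)
  then have "x ^ (k - 1) * (x * F (Suc k) x) \<le> x ^ (k - 1) * (real k * F k x)"
    using x assms(2) by (intro mult_left_mono) auto
  moreover have "x ^ k = x ^ (k - 1) * x"
    using assms(1) by (simp add: power_eq_if)
  ultimately have "0 \<le> (real k * x ^ (k - 1) * F k x - x ^ k * F (Suc k) x) / (F k x)\<^sup>2"
    by (simp add: algebra_simps)
  moreover have "((\<lambda>z. z ^ k / F k z) has_real_derivative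
      (real k * x ^ (k - 1) * F k x - x ^ k * F (Suc k) x) / (F k x)\<^sup>2) (at x)"
    using F_x assms(1)
    by (auto intro!: derivative_eq_intros has_real_derivative_F simp: power2_eq_square)
  ultimately show "\<exists>y. ((\<lambda>z. z ^ k / F k z) has_real_derivative y) (at x) \<and> 0 \<le> y"
    by blast
qed

lemma j_Bstar: "j n (Bstar n) = Bstar n ^ (2*n+1) / F (2*n+1) (Bstar n)"
proof -
  let ?c = "Bstar n ^ (2*n+1) / F (2*n+1) (Bstar n)"
  have F_B: "F (2*n+1) (Bstar n) > 0" and G_B: "G (2*n+1) (Bstar n) > 0"
    unfolding G_def by (rule F_pos)+
  then have "Bstar n ^ (2*n+1) + Bstar n ^ (2*n+1) * G (2*n+1) (Bstar n) / F (2*n+1) (Bstar n)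
      = ?c * (F (2*n+1) (Bstar n) + G (2*n+1) (Bstar n))"
    by (simp add: field_simps)
  then have "j n (Bstar n) = ?c * (F (2*n+1) (Bstar n) + G (2*n+1) (Bstar n)) /
      (F (2*n+1) (Bstar n) + G (2*n+1) (Bstar n))"
    by (simp add: j_def)
  also have "\<dots> = ?c" using F_B G_B by simp
  finally show ?thesis .
qed

lemma power_le_j_Bstar_mult_F:
  assumes "0 \<le> z" "z \<le> Bstar n"
  shows "z ^ (2*n+1) \<le> j n (Bstar n) * F (2*n+1) z"
  using power_div_F_le[of "2*n+1" z "Bstar n"] assms Bstar_pos_and_eq[of n] F_pos[of "2*n+1" z]
  by (simp add: j_Bstar pos_divide_le_eq mult.commute)

lemma powr_n_half_eq_sqrt_power:
  assumes "0 < a"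
  shows "a powr (real n + 1/2) = sqrt a ^ (2*n+1)"
proof -
  have "a powr (real n + 1/2) = a ^ n * sqrt a"
    using assms by (simp add: powr_add powr_realpow powr_half_sqrt)
  also have "\<dots> = sqrt a ^ (2*n+1)"
    using assms by (simp add: power_mult power_add)
  finally show ?thesis .
qed

lemma g_eq:
  assumes "t < 1"
  shows "g n t x = sqrt (1 - t) ^ (2*n+1) * j n (Bstar n) * G (2*n+1) (\<bar>x\<bar> / sqrt (1 - t))
    + \<bar>x\<bar> ^ (2*n+1)"
proof -
  have "0 < Bstar n * sqrt (1 - t)"
    using Bstar_pos_and_eq[of n] assms by simp
  then have "- \<bar>x\<bar> < Bstar n * sqrt (1 - t)" by linarith
  then have "U n t (- \<bar>x\<bar>) = sqrt (1 - t) ^ (2*n+1) * j n (Bstar n) * G (2*n+1) (\<bar>x\<bar> / sqrt (1 - t))"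
    using assms by (simp add: U_def G_def j_Bstar powr_n_half_eq_sqrt_power)
  moreover have "g n t x = U n t (- \<bar>x\<bar>) + \<bar>x\<bar> ^ (2*n+1)"
    by (cases "x \<le> 0") (simp_all add: g_def power_minus_odd)
  ultimately show ?thesis by simp
qed

lemma Jstar_eq:
  assumes "t < 1" "\<bar>x\<bar> < Bstar n * sqrt (1 - t)"
  shows "Jstar n t x = sqrt (1 - t) ^ (2*n+1) * j n (Bstar n)
    * (F (2*n+1) (\<bar>x\<bar> / sqrt (1 - t)) + G (2*n+1) (\<bar>x\<bar> / sqrt (1 - t)))"
  using assms by (cases "x \<le> 0") (simp_all add: Jstar_def G_def powr_n_half_eq_sqrt_power)

theorem lemma4p4:
  fixes n :: nat and t x :: real
  assumes "0 \<le> t" and "t < 1"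
  shows "Jstar n t x \<ge> g n t x"
proof (cases "\<bar>x\<bar> < Bstar n * sqrt (1 - t)")
  case inside: True
  define s where "s = sqrt (1 - t)"
  define y where "y = \<bar>x\<bar> / s"
  have s: "s > 0" using assms by (simp add: s_def)
  have x_eq: "\<bar>x\<bar> = s * y" using s by (simp add: y_def)
  have "0 \<le> y" "y < Bstar n"
    using inside s by (simp_all add: y_def s_def divide_less_eq mult.commute)
  then have "y ^ (2*n+1) \<le> j n (Bstar n) * F (2*n+1) y"
    by (intro power_le_j_Bstar_mult_F) auto
  then have "s ^ (2*n+1) * y ^ (2*n+1) \<le> s ^ (2*n+1) * (j n (Bstar n) * F (2*n+1) y)"
    using s by (intro mult_left_mono) auto
  then show ?thesis
    using g_eq[OF assms(2), of n x] Jstar_eq[OF assms(2) inside]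
    by (simp add: x_eq power_mult_distrib algebra_simps flip: s_def y_def)
qed (simp add: Jstar_def)

end
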